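(* Fix the parameters $S_1,\dots,S_{\mathcal K}$, $\lambda_1,\dots,\lambda_{\mathcal K}$ of the storage model in the context. Suppose that the linear system \[ \sum_{j=1}^{\kappa_i}\alpha_{ij}=\lambda_i\ (i=1,\dots,\mathcal K),\qquad \sum_{i=1}^{\mathcal K}\sum_{j=1}^{\kappa_i}\alpha_{ij}\,\delta_{\ell,s^i_j}=\tfrac1n\ (\ell=1,\dots,n) \] has no positive solution $(\alpha_{ij})$ (i.e. no solution with all $\alpha_{ij}>0$). Then for any routing policy $P$, the shape process $\tilde X(t)$ with routing policy $P$ is not positive recurrent.
   Context: Storage model: there are $n$ nodes $\{1,\dots,n\}$ and $\mathcal K\ge1$ non-empty neighborhoods $S_1,\dots,S_{\mathcal K}\subset\{1,\dots,n\}$ with $\bigcup_i S_i=\{1,\dots,n\}$; $\kappa_i=|S_i|$ and $S_i=\{s^i_1,\dots,s^i_{\kappa_i}\}$. Items arrive at $S_i$ as independent Poisson processes with rates $\lambda_i>0$, $\sum_{i=1}^{\mathcal K}\lambda_i=1$. Let $\Lambda_i=\{p\in\mathbb R^{\kappa_i}:p_j\ge0,\sum_j p_j=1\}$. A routing policy is a map $P:\mathbb N^n\to\Lambda_1\times\dots\times\Lambda_{\mathcal K}$ with $P(x+c\mathbf 1)=P(x)$ for all integers $c$; an item arriving at $S_i$ when the configuration is $x$ is stored at node $s^i_j$ with probability $p^{(i)}_j(x)$, independently for each arrival (the policy need not be local). $X(t)$ is the vector of node loads, $M(t)=\frac1n\sum_iX_i(t)$, the shape is $\tilde X(t)=X(t)-M(t)\mathbf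 1$, and $\tilde X^e(m)$ is the shape observed at successive arrival moments. With $\tau=\inf\{m>0:\tilde X^e(m)=0\}$, the process is positive recurrent if $\mathbf E(\tau\mid\tilde X^e(0)=x)<\infty$ for every state $x$. $\delta_{\ell,m}$ is the Kronecker delta. *)

theory Defs
  imports "HOL-Analysis.Analysis"
begin

text \<open>Nodes are 1..n, neighborhoods are indexed by i in 1..K,
  neighborhood S_i is enumerated as s i 1, ..., s i (kappa i).
  A configuration (vector of node loads in N^n) is a function nat => nat
  vanishing outside {1..n}.  A routing policy is p x i j = p^(i)_j(x).\<close>

definition configs :: "nat \<Rightarrow> (nat \<Rightarrow> nat) set" where
  "configs n = {x. \<forall>l. l \<notin> {1..n} \<longrightarrow> x l = 0}"

definition nbhd :: "(nat \<Rightarrow> nat \<Rightarrow> nat) \<Rightarrow> nat \<Rightarrow> nat \<Rightarrow> nat set" where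
  "nbhd s kappa i = s i ` {1..kappa}"

definition storage_model ::
  "nat \<Rightarrow> nat \<Rightarrow> (nat \<Rightarrow> nat) \<Rightarrow> (nat \<Rightarrow> nat \<Rightarrow> nat) \<Rightarrow> (nat \<Rightarrow> real) \<Rightarrow> bool" where
  "storage_model n K kappa s lam \<longleftrightarrow>
     K \<ge> 1 \<and>
     (\<forall>i\<in>{1..K}. kappa i \<ge> 1 \<and> inj_on (s i) {1..kappa i} \<and> s i ` {1..kappa i} \<subseteq> {1..n}) \<and>
     (\<Union>i\<in>{1..K}. nbhd s (kappa i) i) = {1..n} \<and>
     (\<forall>i\<in>{1..K}. lam i > 0) \<and> (\<Sum>i=1..K. lam i) = 1"

definition routing_policy ::
  "nat \<Rightarrow> nat \<Rightarrow> (nat \<Rightarrow> nat) \<Rightarrow> ((nat \<Rightarrow> nat) \<Rightarrow> nat \<Rightarrow> nat \<Rightarrow> real) \<Rightarrow> bool" where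
  "routing_policy n K kappa p \<longleftrightarrow>
     (\<forall>x\<in>configs n. \<forall>i\<in>{1..K}.
        (\<forall>j\<in>{1..kappa i}. p x i j \<ge> 0) \<and> (\<Sum>j=1..kappa i. p x i j) = 1) \<and>
     (\<forall>x\<in>configs n. \<forall>c::nat. \<forall>i\<in>{1..K}. \<forall>j\<in>{1..kappa i}.
        p (\<lambda>l. if l \<in> {1..n} then x l + c else 0) i j = p x i j)"

definition load_mean :: "nat \<Rightarrow> (nat \<Rightarrow> nat) \<Rightarrow> real" where
  "load_mean n x = (\<Sum>l=1..n. real (x l)) / real n"

definition shape :: "nat \<Rightarrow> (nat \<Rightarrow> nat) \<Rightarrow> nat \<Rightarrow> real" where
  "shape n x = (\<lambda>l. if l \<in> {1..n} then real (x l) - load_mean n x else 0)"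

definition add_item :: "(nat \<Rightarrow> nat) \<Rightarrow> nat \<Rightarrow> (nat \<Rightarrow> nat)" where
  "add_item x l = x(l := Suc (x l))"

text \<open>survival ... m x = Pr(tau > m | X^e(0) = x) for the embedded chain at arrival moments:
  at each arrival the neighborhood is i with probability lam i (Poisson rates summing to 1),
  the item is stored at s i j with probability p x i j.
  tau = inf {m > 0. shape after the m-th arrival = 0}.\<close>
primrec survival ::
  "nat \<Rightarrow> nat \<Rightarrow> (nat \<Rightarrow> nat) \<Rightarrow> (nat \<Rightarrow> nat \<Rightarrow> nat) \<Rightarrow> (nat \<Rightarrow> real) \<Rightarrow>
   ((nat \<Rightarrow> nat) \<Rightarrow> nat \<Rightarrow> nat \<Rightarrow> real) \<Rightarrow> nat \<Rightarrow> (nat \<Rightarrow> nat) \<Rightarrow> real" where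
  "survival n K kappa s lam p 0 x = 1"
| "survival n K kappa s lam p (Suc m) x =
     (\<Sum>i=1..K. \<Sum>j=1..kappa i. lam i * p x i j *
        (let y = add_item x (s i j) in
         if shape n y = (\<lambda>_. 0) then 0 else survival n K kappa s lam p m y))"

text \<open>E(tau | X^e(0) = x) = sum over m \<ge> 0 of Pr(tau > m) (possibly infinite).\<close>
definition expected_return_time ::
  "nat \<Rightarrow> nat \<Rightarrow> (nat \<Rightarrow> nat) \<Rightarrow> (nat \<Rightarrow> nat \<Rightarrow> nat) \<Rightarrow> (nat \<Rightarrow> real) \<Rightarrow>
   ((nat \<Rightarrow> nat) \<Rightarrow> nat \<Rightarrow> nat \<Rightarrow> real) \<Rightarrow> (nat \<Rightarrow> nat) \<Rightarrow> ennreal" where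
  "expected_return_time n K kappa s lam p x =
     (\<Sum>m. ennreal (survival n K kappa s lam p m x))"

definition positive_recurrent ::
  "nat \<Rightarrow> nat \<Rightarrow> (nat \<Rightarrow> nat) \<Rightarrow> (nat \<Rightarrow> nat \<Rightarrow> nat) \<Rightarrow> (nat \<Rightarrow> real) \<Rightarrow>
   ((nat \<Rightarrow> nat) \<Rightarrow> nat \<Rightarrow> nat \<Rightarrow> real) \<Rightarrow> bool" where
  "positive_recurrent n K kappa s lam p \<longleftrightarrow>
     (\<forall>x\<in>configs n. expected_return_time n K kappa s lam p x < \<infinity>)"

end

theory Submission
  imports Defs
begin

text \<open>By Farkas' lemma, if the system has no positive solution then there are node weights
  \<open>w\<close> with \<open>\<Sum>l w l = 0\<close>, some \<open>w l > 0\<close>, and neighbourhood bounds \<open>mm i \<le> min\<^sub>j w (s i j)\<close>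
  with \<open>\<Sum>i \<lambda>\<^sub>i mm i \<ge> 0\<close>. The linear function \<open>g x = \<Sum>l w l x l\<close> vanishes whenever the shape
  is \<open>0\<close> and, whatever the routing policy, increases in expectation at every arrival, while
  each arrival increases it by at most \<open>B = max w\<close>. Started from a configuration with
  \<open>g x > 0\<close>, the process \<open>g\<close> stopped at \<open>\<tau>\<close> is a submartingale, so
  \<open>g x \<le> E[g(X\<^sub>m); \<tau> > m] \<le> (g x + B m) P(\<tau> > m)\<close>. Hence \<open>P(\<tau> > m)\<close> decays no faster
  than \<open>1/m\<close> and \<open>E \<tau> = \<Sum>\<^sub>m P(\<tau> > m)\<close> diverges.\<close>

section \<open>Farkas' lemma\<close>

definition dot_on :: "'c set \<Rightarrow> ('c \<Rightarrow> real) \<Rightarrow> ('c \<Rightarrow> real) \<Rightarrow> real" where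
  "dot_on D y a = (\<Sum>c\<in>D. y c * a c)"

lemma dot_on_diff_right:
  "dot_on D y (\<lambda>c. r * a c - t * d c) = r * dot_on D y a - t * dot_on D y d"
  unfolding dot_on_def by (simp add: sum_subtractf sum_distrib_left algebra_simps)

lemma dot_on_diff_left:
  "dot_on D (\<lambda>c. r * z c - t * y c) a = r * dot_on D z a - t * dot_on D y a"
  unfolding dot_on_def by (simp add: sum_subtractf sum_distrib_left algebra_simps)

lemma dot_on_self_neg:
  assumes "finite D" "c \<in> D" "b c \<noteq> 0"
  shows "dot_on D (\<lambda>c. - b c) b < 0"
proof -
  have "(b c)\<^sup>2 \<le> (\<Sum>c\<in>D. (b c)\<^sup>2)"
    using assms by (intro member_le_sum) auto
  moreover have "(b c)\<^sup>2 > 0" using assms by simp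
  ultimately show ?thesis
    unfolding dot_on_def by (simp add: power2_eq_square sum_negf)
qed

text \<open>The inductive step of Farkas' lemma: if the new generator \<open>a e\<close> is the only one that
  \<open>y\<close> fails to separate from \<open>b\<close>, all vectors are projected along \<open>a e\<close> onto the hyperplane
  orthogonal to \<open>y\<close>, and either alternative for the projected problem lifts back.\<close>

lemma cone_combination_lift:
  assumes "finite E" "e \<notin> E" and t: "t = dot_on D y (a e)" "t < 0"
    and yb: "dot_on D y b < 0" and ya: "\<forall>k\<in>E. dot_on D y (a k) \<ge> 0"
    and "\<exists>\<mu>. (\<forall>k\<in>E. \<mu> k \<ge> 0) \<and> (\<forall>c\<in>D. t * b c - dot_on D y b * a e c
                 = (\<Sum>k\<in>E. \<mu> k * (t * a k c - dot_on D y (a k) * a e c)))"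
  shows "\<exists>\<mu>'. (\<forall>k\<in>insert e E. \<mu>' k \<ge> 0) \<and> (\<forall>c\<in>D. b c = (\<Sum>k\<in>insert e E. \<mu>' k * a k c))"
proof -
  obtain \<mu> where \<mu>: "\<forall>k\<in>E. \<mu> k \<ge> 0" and comb: "\<forall>c\<in>D. t * b c - dot_on D y b * a e c
      = (\<Sum>k\<in>E. \<mu> k * (t * a k c - dot_on D y (a k) * a e c))"
    using assms(7) by blast
  define r where "r = (dot_on D y b - (\<Sum>k\<in>E. \<mu> k * dot_on D y (a k))) / t"
  have "(\<Sum>k\<in>E. \<mu> k * dot_on D y (a k)) \<ge> 0"
    using \<mu> ya by (intro sum_nonneg) auto
  with yb t have r: "r \<ge> 0"
    unfolding r_def by (intro divide_nonpos_neg) auto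
  have "b c = (\<Sum>k\<in>insert e E. (\<mu>(e := r)) k * a k c)" if c: "c \<in> D" for c
  proof -
    have "t * b c = t * (\<Sum>k\<in>E. \<mu> k * a k c)
                    + (dot_on D y b - (\<Sum>k\<in>E. \<mu> k * dot_on D y (a k))) * a e c"
      using comb c by (simp add: algebra_simps sum_subtractf sum_distrib_left sum_distrib_right)
    also have "dot_on D y b - (\<Sum>k\<in>E. \<mu> k * dot_on D y (a k)) = t * r"
      unfolding r_def using t by simp
    finally have "t * b c = t * ((\<Sum>k\<in>E. \<mu> k * a k c) + r * a e c)"
      by (simp add: algebra_simps)
    then have "b c = (\<Sum>k\<in>E. \<mu> k * a k c) + r * a e c"
      using t by simp
    moreover have "(\<Sum>k\<in>E. (\<mu>(e := r)) k * a k c) = (\<Sum>k\<in>E. \<mu> k * a k c)"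
      using \<open>e \<notin> E\<close> by (intro sum.cong) auto
    ultimately show ?thesis using assms(1,2) by simp
  qed
  moreover have "\<forall>k\<in>insert e E. (\<mu>(e := r)) k \<ge> 0" using \<mu> r by auto
  ultimately show ?thesis by blast
qed

lemma separator_lift:
  assumes t: "t = dot_on D y (a e)"
    and "\<exists>z. (\<forall>k\<in>E. dot_on D z (\<lambda>c. t * a k c - dot_on D y (a k) * a e c) \<ge> 0)
            \<and> dot_on D z (\<lambda>c. t * b c - dot_on D y b * a e c) < 0"
  shows "\<exists>y'. (\<forall>k\<in>insert e E. dot_on D y' (a k) \<ge> 0) \<and> dot_on D y' b < 0"
proof -
  obtain z where z: "\<forall>k\<in>E. dot_on D z (\<lambda>c. t * a k c - dot_on D y (a k) * a e c) \<ge> 0"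
      "dot_on D z (\<lambda>c. t * b c - dot_on D y b * a e c) < 0"
    using assms(2) by blast
  define y' where "y' c = t * z c - dot_on D z (a e) * y c" for c
  have "dot_on D y' (a k) = dot_on D z (\<lambda>c. t * a k c - dot_on D y (a k) * a e c)" for k
    unfolding y'_def dot_on_diff_left dot_on_diff_right by (simp add: algebra_simps)
  moreover have "dot_on D y' (a e) = 0"
    unfolding y'_def dot_on_diff_left t by simp
  moreover have "dot_on D y' b = dot_on D z (\<lambda>c. t * b c - dot_on D y b * a e c)"
    unfolding y'_def dot_on_diff_left dot_on_diff_right by (simp add: algebra_simps)
  ultimately show ?thesis using z t by (intro exI[of _ y']) (auto simp: mult.commute)
qed

theorem farkas_alternative:
  fixes a :: "'e \<Rightarrow> 'c \<Rightarrow> real" and b :: "'c \<Rightarrow> real"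
  assumes "finite E" "finite D"
  shows "(\<exists>\<mu>. (\<forall>e\<in>E. \<mu> e \<ge> 0) \<and> (\<forall>c\<in>D. b c = (\<Sum>e\<in>E. \<mu> e * a e c)))
      \<or> (\<exists>y. (\<forall>e\<in>E. dot_on D y (a e) \<ge> 0) \<and> dot_on D y b < 0)"
  using assms(1)
proof (induction E arbitrary: a b rule: finite_induct)
  case empty
  show ?case
  proof (cases "\<forall>c\<in>D. b c = 0")
    case False
    then show ?thesis using dot_on_self_neg[OF assms(2)] by blast
  qed simp
next
  case (insert e E)
  consider (comb) "\<exists>\<mu>. (\<forall>e\<in>E. \<mu> e \<ge> 0) \<and> (\<forall>c\<in>D. b c = (\<Sum>e\<in>E. \<mu> e * a e c))"
    | (sep) y where "\<forall>k\<in>E. dot_on D y (a k) \<ge> 0" "dot_on D y b < 0"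
    using insert.IH by blast
  then show ?case
  proof cases
    case comb
    then obtain \<mu> where "\<forall>e\<in>E. \<mu> e \<ge> 0" "\<forall>c\<in>D. b c = (\<Sum>e\<in>E. \<mu> e * a e c)" by blast
    moreover have "(\<Sum>k\<in>E. (\<mu>(e := 0)) k * a k c) = (\<Sum>k\<in>E. \<mu> k * a k c)" for c
      using insert.hyps by (intro sum.cong) auto
    ultimately show ?thesis using insert.hyps
      by (intro disjI1 exI[of _ "\<mu>(e := 0)"]) auto
  next
    case (sep y)
    show ?thesis
    proof (cases "dot_on D y (a e) \<ge> 0")
      case True
      then show ?thesis using sep by auto
    next
      case False
      define t where "t = dot_on D y (a e)"
      have "t < 0" using False t_def by simp
      from insert.IH[of "\<lambda>c. t * b c - dot_on D y b * a e c"
          "\<lambda>k c. t * a k c - dot_on D y (a k) * a e c"]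
      show ?thesis
        using cone_combination_lift[OF insert.hyps t_def \<open>t < 0\<close> sep(2,1)] separator_lift[where E = E and b = b and a = a and e = e, OF t_def]
        by blast
    qed
  qed
qed

lemma dot_on_sum_right:
  "dot_on D y (\<lambda>c. \<Sum>e\<in>E. a e c) = (\<Sum>e\<in>E. dot_on D y (a e))"
  unfolding dot_on_def by (simp add: sum_distrib_left sum.swap[of _ D])

lemma dot_on_uminus_right: "dot_on D y (\<lambda>c. - a c) = - dot_on D y a"
  unfolding dot_on_def by (simp add: sum_negf)

text \<open>Farkas' lemma for strictly positive combinations, in homogenised form: the
  coefficients \<open>\<mu> e + 1\<close> are bounded away from 0, and \<open>\<tau>\<close> rescales the target.\<close>

lemma farkas_positive_alternative:
  fixes a :: "'e \<Rightarrow> 'c \<Rightarrow> real" and b :: "'c \<Rightarrow> real"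
  assumes "finite E" "finite D"
  shows "(\<exists>\<mu> \<tau>. (\<forall>e\<in>E. \<mu> e \<ge> 0) \<and> \<tau> \<ge> 0 \<and>
            (\<forall>c\<in>D. (\<Sum>e\<in>E. (\<mu> e + 1) * a e c) = \<tau> * b c))
      \<or> (\<exists>y. (\<forall>e\<in>E. dot_on D y (a e) \<ge> 0) \<and> dot_on D y b \<le> 0 \<and>
            (\<Sum>e\<in>E. dot_on D y (a e)) > 0)"
proof -
  define a' where "a' = case_option (\<lambda>c. - b c) a"
  have sum_E': "(\<Sum>e\<in>insert None (Some ` E). f e) = f None + (\<Sum>e\<in>E. f (Some e))" for f :: "_ \<Rightarrow> real"
    using assms(1) by (simp add: sum.reindex)
  consider (comb) \<mu>' where "\<forall>e\<in>insert None (Some ` E). \<mu>' e \<ge> 0"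
      "\<forall>c\<in>D. - (\<Sum>e\<in>E. a e c) = (\<Sum>e\<in>insert None (Some ` E). \<mu>' e * a' e c)"
    | (sep) y where "\<forall>e\<in>insert None (Some ` E). dot_on D y (a' e) \<ge> 0"
      "dot_on D y (\<lambda>c. - (\<Sum>e\<in>E. a e c)) < 0"
    using farkas_alternative[OF _ assms(2), of "insert None (Some ` E)" "\<lambda>c. - (\<Sum>e\<in>E. a e c)" a']
      assms(1) by blast
  then show ?thesis
  proof cases
    case comb
    then have "\<forall>c\<in>D. (\<Sum>e\<in>E. (\<mu>' (Some e) + 1) * a e c) = \<mu>' None * b c"
      unfolding sum_E' a'_def by (simp add: algebra_simps sum.distrib)
    then show ?thesis using comb(1) by (intro disjI1 exI[of _ "\<mu>' \<circ> Some"]) auto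
  next
    case sep
    then show ?thesis
      unfolding a'_def dot_on_uminus_right dot_on_sum_right
      by (intro disjI2 exI[of _ y]) (auto simp: dot_on_uminus_right)
  qed
qed

section \<open>Infeasibility of the allocation system gives a drift certificate\<close>

lemma storage_modelD:
  assumes "storage_model n K kappa s lam"
  shows "K \<ge> 1"
    and "i \<in> {1..K} \<Longrightarrow> kappa i \<ge> 1"
    and "i \<in> {1..K} \<Longrightarrow> j \<in> {1..kappa i} \<Longrightarrow> s i j \<in> {1..n}"
    and "i \<in> {1..K} \<Longrightarrow> lam i > 0"
    and "(\<Sum>i=1..K. lam i) = 1"
  using assms unfolding storage_model_def by (auto simp: image_subset_iff)

lemma storage_model_nodes_nonempty: "storage_model n K kappa s lam \<Longrightarrow> n \<ge> 1"
  using storage_modelD(1,2) storage_modelD(3)[of n K kappa s lam 1 1] by force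

lemma storage_model_lam_shift:
  assumes "storage_model n K kappa s lam"
  shows "(\<Sum>i=1..K. lam i * (f i + c)) = (\<Sum>i=1..K. lam i * f i) + c"
proof -
  have "(\<Sum>i=1..K. lam i * (f i + c)) = (\<Sum>i=1..K. lam i * f i) + (\<Sum>i=1..K. lam i) * c"
    by (simp add: distrib_left sum.distrib sum_distrib_right)
  then show ?thesis using storage_modelD(5)[OF assms] by simp
qed

text \<open>The linear system of the theorem in matrix form, with unknowns indexed by the routes
  \<open>(i, j)\<close> and equations by \<open>{1..K} <+> {1..n}\<close>: the unknown \<open>\<alpha> i j\<close> enters the rate
  equation of neighbourhood \<open>Inl i\<close> and the load equation of node \<open>Inr (s i j)\<close>.\<close>

definition routes :: "nat \<Rightarrow> (nat \<Rightarrow> nat) \<Rightarrow> (nat \<times> nat) set" where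
  "routes K kappa = Sigma {1..K} (\<lambda>i. {1..kappa i})"

definition incidence :: "(nat \<Rightarrow> nat \<Rightarrow> nat) \<Rightarrow> nat \<times> nat \<Rightarrow> nat + nat \<Rightarrow> real" where
  "incidence s e c = (if c = Inl (fst e) then 1 else 0) + (if c = Inr (s (fst e) (snd e)) then 1 else 0)"

definition demand :: "nat \<Rightarrow> (nat \<Rightarrow> real) \<Rightarrow> nat + nat \<Rightarrow> real" where
  "demand n lam = case_sum lam (\<lambda>_. 1 / real n)"

lemma finite_routes: "finite (routes K kappa)"
  unfolding routes_def by auto

lemma mem_routes_iff: "(i, j) \<in> routes K kappa \<longleftrightarrow> i \<in> {1..K} \<and> j \<in> {1..kappa i}"
  unfolding routes_def by simp

lemma sum_routes: "(\<Sum>e\<in>routes K kappa. f e) = (\<Sum>i=1..K. \<Sum>j=1..kappa i. f (i, j))"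
  unfolding routes_def by (simp add: sum.Sigma)

lemma incidence_combination_Inl:
  assumes "i \<in> {1..K}"
  shows "(\<Sum>e\<in>routes K kappa. f e * incidence s e (Inl i)) = (\<Sum>j=1..kappa i. f (i, j))"
proof -
  have "(\<Sum>e\<in>routes K kappa. f e * incidence s e (Inl i))
      = (\<Sum>i'=1..K. if i = i' then (\<Sum>j=1..kappa i'. f (i', j)) else 0)"
    unfolding sum_routes incidence_def by (intro sum.cong) auto
  then show ?thesis using assms by simp
qed

lemma incidence_combination_Inr:
  "(\<Sum>e\<in>routes K kappa. f e * incidence s e (Inr l))
     = (\<Sum>i=1..K. \<Sum>j=1..kappa i. f (i, j) * (if l = s i j then 1 else 0))"
  unfolding sum_routes incidence_def by simp

lemma dot_on_Plus:
  "finite A \<Longrightarrow> finite B \<Longrightarrow>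
   dot_on (A <+> B) y a = (\<Sum>i\<in>A. y (Inl i) * a (Inl i)) + (\<Sum>l\<in>B. y (Inr l) * a (Inr l))"
  unfolding dot_on_def by (simp add: sum.Plus comp_def)

lemma dot_on_incidence:
  assumes "i \<in> {1..K}" "s i j \<in> {1..n}"
  shows "dot_on ({1..K} <+> {1..n}) y (incidence s (i, j)) = y (Inl i) + y (Inr (s i j))"
  using assms by (simp add: dot_on_Plus incidence_def distrib_left sum.distrib if_distrib if_distribR sum.delta cong: if_cong)

lemma dot_on_demand:
  "dot_on ({1..K} <+> {1..n}) y (demand n lam)
     = (\<Sum>i=1..K. lam i * y (Inl i)) + (\<Sum>l=1..n. y (Inr l)) / real n"
  by (simp add: dot_on_Plus demand_def mult.commute sum_divide_distrib)

lemma positive_allocation_of_cone_point: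
  fixes \<mu> :: "nat \<times> nat \<Rightarrow> real"
  assumes model: "storage_model n K kappa s lam"
    and \<mu>: "\<forall>e\<in>routes K kappa. \<mu> e \<ge> 0"
    and eq: "\<forall>c\<in>{1..K} <+> {1..n}.
               (\<Sum>e\<in>routes K kappa. (\<mu> e + 1) * incidence s e c) = \<tau> * demand n lam c"
  shows "\<exists>\<alpha> :: nat \<Rightarrow> nat \<Rightarrow> real.
           (\<forall>i\<in>{1..K}. \<forall>j\<in>{1..kappa i}. \<alpha> i j > 0) \<and>
           (\<forall>i\<in>{1..K}. (\<Sum>j=1..kappa i. \<alpha> i j) = lam i) \<and>
           (\<forall>l\<in>{1..n}. (\<Sum>i=1..K. \<Sum>j=1..kappa i. \<alpha> i j * (if l = s i j then 1 else 0)) = 1 / real n)"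
proof -
  have \<mu>1: "\<mu> (i, j) + 1 > 0" if "i \<in> {1..K}" "j \<in> {1..kappa i}" for i j
    using \<mu> that mem_routes_iff[of i j K kappa] by fastforce
  have row: "(\<Sum>j=1..kappa i. \<mu> (i, j) + 1) = \<tau> * lam i" if "i \<in> {1..K}" for i
    using eq[rule_format, OF InlI[OF that]]
    by (simp add: incidence_combination_Inl[OF that] demand_def)
  have col: "(\<Sum>i=1..K. \<Sum>j=1..kappa i. (\<mu> (i, j) + 1) * (if l = s i j then 1 else 0)) = \<tau> / real n"
    if "l \<in> {1..n}" for l
    using eq[rule_format, OF InrI[OF that]] by (simp add: incidence_combination_Inr demand_def)
  have K: "1 \<in> {1..K}" "1 \<in> {1..kappa 1}"
    using storage_modelD(1,2)[OF model] by auto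
  have "(\<Sum>j=1..kappa 1. \<mu> (1, j) + 1) > 0"
    using \<mu>1[OF K(1)] K(2) by (intro sum_pos) auto
  then have \<tau>: "\<tau> > 0"
    using row[OF K(1)] storage_modelD(4)[OF model K(1)] by (simp add: zero_less_mult_iff)
  show ?thesis
    using \<mu>1 row col \<tau>
    by (intro exI[of _ "\<lambda>i j. (\<mu> (i, j) + 1) / \<tau>"]) (simp add: sum_divide_distrib[symmetric])
qed

text \<open>\<open>w\<close> is a linear Lyapunov function of the loads. It vanishes on balanced configurations
  because the weights sum to zero, and since every route of neighbourhood \<open>i\<close> raises it by
  at least \<open>mm i\<close>, its expected increment at an arrival is nonnegative under every policy.\<close>

locale drift_certificate =
  fixes n K :: nat and kappa :: "nat \<Rightarrow> nat" and s :: "nat \<Rightarrow> nat \<Rightarrow> nat"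
    and lam :: "nat \<Rightarrow> real" and w mm :: "nat \<Rightarrow> real"
  assumes model: "storage_model n K kappa s lam"
    and weights_sum_zero: "(\<Sum>l=1..n. w l) = 0"
    and weight_pos: "\<exists>l\<in>{1..n}. w l > 0"
    and min_weight_le: "\<And>i j. i \<in> {1..K} \<Longrightarrow> j \<in> {1..kappa i} \<Longrightarrow> mm i \<le> w (s i j)"
    and drift_nonneg: "(\<Sum>i=1..K. lam i * mm i) \<ge> 0"

lemma dual_route_sum_eq_0_of_constant:
  assumes model: "storage_model n K kappa s lam"
    and route: "\<And>i j. i \<in> {1..K} \<Longrightarrow> j \<in> {1..kappa i} \<Longrightarrow> u i + v (s i j) \<ge> 0"
    and dem: "(\<Sum>i=1..K. lam i * u i) + v0 \<le> 0"
    and v_const: "\<And>l. l \<in> {1..n} \<Longrightarrow> v l = v0"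
  shows "(\<Sum>i=1..K. \<Sum>j=1..kappa i. u i + v (s i j)) = 0"
proof -
  note sij = storage_modelD(3)[OF model] and lam_pos = storage_modelD(4)[OF model]
  have terms_nonneg: "\<forall>i\<in>{1..K}. lam i * (u i + v0) \<ge> 0"
  proof
    fix i assume i: "i \<in> {1..K}"
    then have one: "1 \<in> {1..kappa i}" using storage_modelD(2)[OF model i] by simp
    have "u i + v0 \<ge> 0" using route[OF i one] v_const[OF sij[OF i one]] by simp
    then show "lam i * (u i + v0) \<ge> 0" using lam_pos[OF i] by simp
  qed
  have "(\<Sum>i=1..K. lam i * (u i + v0)) \<le> 0"
    using dem storage_model_lam_shift[OF model] by simp
  then have "(\<Sum>i=1..K. lam i * (u i + v0)) = 0"
    using terms_nonneg by (meson antisym sum_nonneg)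
  then have "lam i * (u i + v0) = 0" if "i \<in> {1..K}" for i
    using sum_nonneg_eq_0_iff[of "{1..K}" "\<lambda>i. lam i * (u i + v0)"] terms_nonneg that by simp
  then have "u i + v0 = 0" if "i \<in> {1..K}" for i
    using lam_pos[OF that] that by fastforce
  then have "u i + v (s i j) = 0" if "i \<in> {1..K}" "j \<in> {1..kappa i}" for i j
    using that v_const[OF sij[OF that]] by simp
  then show ?thesis by simp
qed

lemma drift_certificate_of_dual:
  assumes model: "storage_model n K kappa s lam"
    and route: "\<And>i j. i \<in> {1..K} \<Longrightarrow> j \<in> {1..kappa i} \<Longrightarrow> u i + v (s i j) \<ge> 0"
    and dem: "(\<Sum>i=1..K. lam i * u i) + (\<Sum>l=1..n. v l) / real n \<le> 0"
    and strict: "(\<Sum>i=1..K. \<Sum>j=1..kappa i. u i + v (s i j)) > 0"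
  defines "v0 \<equiv> (\<Sum>l=1..n. v l) / real n"
  shows "drift_certificate n K kappa s lam (\<lambda>l. v l - v0) (\<lambda>i. - u i - v0)"
proof
  show "storage_model n K kappa s lam" by (fact model)
  show sum_zero: "(\<Sum>l=1..n. v l - v0) = 0"
    using storage_model_nodes_nonempty[OF model] by (simp add: sum_subtractf v0_def)
  show "- u i - v0 \<le> v (s i j) - v0" if "i \<in> {1..K}" "j \<in> {1..kappa i}" for i j
    using route[OF that] by simp
  have "(\<Sum>i=1..K. lam i * (- u i - v0)) = - (\<Sum>i=1..K. lam i * (u i + v0))"
    unfolding sum_negf[symmetric] by (intro sum.cong) (auto simp: algebra_simps)
  then show "(\<Sum>i=1..K. lam i * (- u i - v0)) \<ge> 0"
    using dem storage_model_lam_shift[OF model] unfolding v0_def by simp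
  show "\<exists>l\<in>{1..n}. v l - v0 > 0"
  proof (rule ccontr)
    assume "\<not> (\<exists>l\<in>{1..n}. v l - v0 > 0)"
    then have "\<forall>l\<in>{1..n}. v0 - v l \<ge> 0" by auto
    moreover have "(\<Sum>l=1..n. v0 - v l) = 0"
      using sum_zero by (simp add: sum_subtractf)
    ultimately have "v l = v0" if "l \<in> {1..n}" for l
      using sum_nonneg_eq_0_iff[of "{1..n}" "\<lambda>l. v0 - v l"] that by simp
    from dual_route_sum_eq_0_of_constant[OF model route dem[folded v0_def] this] strict
    show False by simp
  qed
qed

lemma drift_certificate_of_no_positive_allocation:
  assumes model: "storage_model n K kappa s lam"
    and no_pos_sol: "\<not> (\<exists>\<alpha> :: nat \<Rightarrow> nat \<Rightarrow> real.
           (\<forall>i\<in>{1..K}. \<forall>j\<in>{1..kappa i}. \<alpha> i j > 0) \<and>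
           (\<forall>i\<in>{1..K}. (\<Sum>j=1..kappa i. \<alpha> i j) = lam i) \<and>
           (\<forall>l\<in>{1..n}. (\<Sum>i=1..K. \<Sum>j=1..kappa i. \<alpha> i j * (if l = s i j then 1 else 0)) = 1 / real n))"
  shows "\<exists>w mm. drift_certificate n K kappa s lam w mm"
proof -
  let ?D = "{1..K} <+> {1..n}"
  have "finite ?D" by simp
  have "\<not> (\<exists>\<mu> \<tau>. (\<forall>e\<in>routes K kappa. \<mu> e \<ge> 0) \<and> \<tau> \<ge> 0 \<and>
      (\<forall>c\<in>?D. (\<Sum>e\<in>routes K kappa. (\<mu> e + 1) * incidence s e c) = \<tau> * demand n lam c))"
    using positive_allocation_of_cone_point[OF model] no_pos_sol by blast
  then obtain y where y_route: "\<forall>e\<in>routes K kappa. dot_on ?D y (incidence s e) \<ge> 0"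
    and y_dem: "dot_on ?D y (demand n lam) \<le> 0"
    and y_strict: "(\<Sum>e\<in>routes K kappa. dot_on ?D y (incidence s e)) > 0"
    using farkas_positive_alternative[OF finite_routes[of K kappa] \<open>finite ?D\<close>, where a = "incidence s"
        and b = "demand n lam"] by blast
  have dot_route: "dot_on ?D y (incidence s (i, j)) = y (Inl i) + y (Inr (s i j))"
    if "i \<in> {1..K}" "j \<in> {1..kappa i}" for i j
    using dot_on_incidence storage_modelD(3)[OF model that] that by blast
  let ?v0 = "(\<Sum>l=1..n. y (Inr l)) / real n"
  have "drift_certificate n K kappa s lam (\<lambda>l. y (Inr l) - ?v0) (\<lambda>i. - y (Inl i) - ?v0)"
  proof (rule drift_certificate_of_dual[OF model])
    show "y (Inl i) + y (Inr (s i j)) \<ge> 0" if "i \<in> {1..K}" "j \<in> {1..kappa i}" for i j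
      using bspec[OF y_route, of "(i, j)"] dot_route[OF that] that by (simp add: mem_routes_iff)
    show "(\<Sum>i=1..K. lam i * y (Inl i)) + (\<Sum>l=1..n. y (Inr l)) / real n \<le> 0"
      using y_dem unfolding dot_on_demand .
    have "(\<Sum>e\<in>routes K kappa. dot_on ?D y (incidence s e))
        = (\<Sum>i=1..K. \<Sum>j=1..kappa i. y (Inl i) + y (Inr (s i j)))"
      unfolding sum_routes by (intro sum.cong refl dot_route)
    then show "(\<Sum>i=1..K. \<Sum>j=1..kappa i. y (Inl i) + y (Inr (s i j))) > 0"
      using y_strict by simp
  qed
  then show ?thesis by blast
qed

section \<open>Non-recurrence under a nonnegative linear drift\<close>

lemma not_summable_harmonic_minorant:
  fixes f :: "nat \<Rightarrow> real"
  assumes "c > 0" and minorant: "\<And>m. c / real (Suc m) \<le> f m"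
  shows "\<not> summable f"
proof
  assume "summable f"
  then have "summable (\<lambda>m. c / real (Suc m))"
    by (rule summable_comparison_test'[of f 0]) (use assms in auto)
  then have "summable (\<lambda>m. inverse c * (c / real (Suc m)))"
    by (rule summable_mult)
  then have "summable (\<lambda>m. inverse (real (Suc m)))"
    using \<open>c > 0\<close> by (simp add: divide_inverse)
  then show False
    using not_summable_harmonic summable_Suc_iff by blast
qed

definition weighted_load :: "nat \<Rightarrow> (nat \<Rightarrow> real) \<Rightarrow> (nat \<Rightarrow> nat) \<Rightarrow> real" where
  "weighted_load n w x = (\<Sum>l=1..n. w l * real (x l))"

lemma weighted_load_add_item:
  assumes "l \<in> {1..n}"
  shows "weighted_load n w (add_item x l) = weighted_load n w x + w l"
proof -
  have "weighted_load n w (add_item x l) = (\<Sum>l'=1..n. w l' * real (x l') + (if l' = l then w l else 0))"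
    unfolding weighted_load_def add_item_def by (intro sum.cong) (auto simp: algebra_simps)
  also have "\<dots> = weighted_load n w x + w l"
    using assms by (simp add: weighted_load_def sum.distrib)
  finally show ?thesis .
qed

lemma weighted_load_balanced:
  assumes "shape n x = (\<lambda>_. 0)" and "(\<Sum>l=1..n. w l) = 0"
  shows "weighted_load n w x = 0"
proof -
  have "real (x l) = load_mean n x" if "l \<in> {1..n}" for l
    using fun_cong[OF assms(1), of l] that by (simp add: shape_def)
  then have "weighted_load n w x = (\<Sum>l=1..n. w l) * load_mean n x"
    unfolding weighted_load_def sum_distrib_right by (intro sum.cong) auto
  then show ?thesis using assms(2) by simp
qed

lemma add_item_configs: "x \<in> configs n \<Longrightarrow> l \<in> {1..n} \<Longrightarrow> add_item x l \<in> configs n"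
  unfolding configs_def add_item_def by auto

text \<open>\<open>stopped_load \<dots> w m x\<close> is the expectation of \<open>weighted_load n w\<close> after \<open>m\<close> arrivals on the
  event that the shape has not returned to \<open>0\<close> yet; it follows the recursion of \<open>survival\<close>.\<close>

primrec stopped_load ::
  "nat \<Rightarrow> nat \<Rightarrow> (nat \<Rightarrow> nat) \<Rightarrow> (nat \<Rightarrow> nat \<Rightarrow> nat) \<Rightarrow> (nat \<Rightarrow> real) \<Rightarrow>
   ((nat \<Rightarrow> nat) \<Rightarrow> nat \<Rightarrow> nat \<Rightarrow> real) \<Rightarrow> (nat \<Rightarrow> real) \<Rightarrow> nat \<Rightarrow> (nat \<Rightarrow> nat) \<Rightarrow> real" where
  "stopped_load n K kappa s lam p w 0 x = weighted_load n w x"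
| "stopped_load n K kappa s lam p w (Suc m) x =
     (\<Sum>i=1..K. \<Sum>j=1..kappa i. lam i * p x i j *
        (let y = add_item x (s i j) in
         if shape n y = (\<lambda>_. 0) then 0 else stopped_load n K kappa s lam p w m y))"

locale routed_drift = drift_certificate +
  fixes p :: "(nat \<Rightarrow> nat) \<Rightarrow> nat \<Rightarrow> nat \<Rightarrow> real"
  assumes policy: "routing_policy n K kappa p"
begin

lemmas route_node = storage_modelD(3)[OF model]

lemma arrival_prob_nonneg:
  "x \<in> configs n \<Longrightarrow> i \<in> {1..K} \<Longrightarrow> j \<in> {1..kappa i} \<Longrightarrow> lam i * p x i j \<ge> 0"
  using policy storage_modelD(4)[OF model] unfolding routing_policy_def
  by (simp add: less_imp_le)

lemma routing_prob_sum: "x \<in> configs n \<Longrightarrow> i \<in> {1..K} \<Longrightarrow> (\<Sum>j=1..kappa i. p x i j) = 1"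
  using policy unfolding routing_policy_def by blast

lemma arrival_configs:
  "x \<in> configs n \<Longrightarrow> i \<in> {1..K} \<Longrightarrow> j \<in> {1..kappa i} \<Longrightarrow> add_item x (s i j) \<in> configs n"
  using add_item_configs route_node by blast

lemma survival_nonneg: "x \<in> configs n \<Longrightarrow> survival n K kappa s lam p m x \<ge> 0"
proof (induction m arbitrary: x)
  case (Suc m)
  show ?case
    unfolding survival.simps Let_def
    using Suc arrival_prob_nonneg arrival_configs by (intro sum_nonneg) auto
qed simp

lemma weighted_load_drift:
  assumes x: "x \<in> configs n"
  shows "weighted_load n w x
    \<le> (\<Sum>i=1..K. \<Sum>j=1..kappa i. lam i * p x i j * weighted_load n w (add_item x (s i j)))"
proof -
  have route_gain: "weighted_load n w x + mm i \<le> weighted_load n w (add_item x (s i j))"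
    if "i \<in> {1..K}" "j \<in> {1..kappa i}" for i j
    using min_weight_le[OF that] weighted_load_add_item[OF route_node[OF that]] by simp
  have "weighted_load n w x \<le> (\<Sum>i=1..K. lam i * (weighted_load n w x + mm i))"
    using drift_nonneg storage_modelD(5)[OF model]
    by (simp add: distrib_left sum.distrib flip: sum_distrib_right)
  also have "\<dots> = (\<Sum>i=1..K. \<Sum>j=1..kappa i. lam i * p x i j * (weighted_load n w x + mm i))"
    using routing_prob_sum[OF x] by (simp flip: sum_distrib_left sum_distrib_right)
  also have "\<dots> \<le> (\<Sum>i=1..K. \<Sum>j=1..kappa i. lam i * p x i j * weighted_load n w (add_item x (s i j)))"
    using x arrival_prob_nonneg route_gain by (intro sum_mono mult_left_mono) auto
  finally show ?thesis .
qed

lemma stopped_load_ge: "x \<in> configs n \<Longrightarrow> weighted_load n w x \<le> stopped_load n K kappa s lam p w m x"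
proof (induction m arbitrary: x)
  case (Suc m)
  have "weighted_load n w y \<le> (if shape n y = (\<lambda>_. 0) then 0 else stopped_load n K kappa s lam p w m y)"
    if "y \<in> configs n" for y
    using Suc.IH[OF that] weighted_load_balanced[OF _ weights_sum_zero] by auto
  then have "(\<Sum>i=1..K. \<Sum>j=1..kappa i. lam i * p x i j * weighted_load n w (add_item x (s i j)))
      \<le> stopped_load n K kappa s lam p w (Suc m) x"
    unfolding stopped_load.simps Let_def using Suc.prems arrival_prob_nonneg arrival_configs
    by (intro sum_mono mult_left_mono) auto
  then show ?case using weighted_load_drift[OF Suc.prems] by linarith
qed simp

lemma stopped_load_le:
  assumes B: "\<And>l. l \<in> {1..n} \<Longrightarrow> w l \<le> B"
  shows "x \<in> configs n \<Longrightarrow>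
    stopped_load n K kappa s lam p w m x \<le> (weighted_load n w x + B * m) * survival n K kappa s lam p m x"
proof (induction m arbitrary: x)
  case (Suc m)
  let ?g = "weighted_load n w x + B * Suc m"
  have step: "(if shape n y = (\<lambda>_. 0) then 0 else stopped_load n K kappa s lam p w m y)
      \<le> ?g * (if shape n y = (\<lambda>_. 0) then 0 else survival n K kappa s lam p m y)"
    if y: "y = add_item x (s i j)" and ij: "i \<in> {1..K}" "j \<in> {1..kappa i}" for y i j
  proof -
    have "weighted_load n w y + B * m \<le> ?g"
      using y weighted_load_add_item[OF route_node[OF ij]] B[OF route_node[OF ij]]
      by (simp add: algebra_simps)
    then have "(weighted_load n w y + B * m) * survival n K kappa s lam p m y
        \<le> ?g * survival n K kappa s lam p m y"
      using survival_nonneg arrival_configs[OF Suc.prems ij] y by (intro mult_right_mono) auto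
    then show ?thesis
      using Suc.IH arrival_configs[OF Suc.prems ij] y by fastforce
  qed
  have "stopped_load n K kappa s lam p w (Suc m) x
      \<le> (\<Sum>i=1..K. \<Sum>j=1..kappa i. lam i * p x i j * (?g *
          (let y = add_item x (s i j) in
           if shape n y = (\<lambda>_. 0) then 0 else survival n K kappa s lam p m y)))"
    unfolding stopped_load.simps Let_def using Suc.prems arrival_prob_nonneg step
    by (intro sum_mono mult_left_mono) auto
  also have "\<dots> = ?g * survival n K kappa s lam p (Suc m) x"
    by (simp add: sum_distrib_left algebra_simps)
  finally show ?case .
qed simp

lemma survival_harmonic_lower_bound:
  assumes x: "x \<in> configs n" and pos: "weighted_load n w x > 0"
    and B: "\<And>l. l \<in> {1..n} \<Longrightarrow> w l \<le> B" "B \<ge> 0"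
  shows "weighted_load n w x / (weighted_load n w x + B) / real (Suc m)
           \<le> survival n K kappa s lam p m x"
proof -
  let ?g = "weighted_load n w x" and ?S = "survival n K kappa s lam p m x"
  have "?g \<le> (?g + B * m) * ?S"
    using stopped_load_ge[OF x] stopped_load_le[OF B(1) x] by (rule order_trans)
  also have "\<dots> \<le> ((?g + B) * Suc m) * ?S"
    using survival_nonneg[OF x] pos B(2) by (intro mult_right_mono) (auto simp: algebra_simps)
  finally show ?thesis
    using pos B(2) by (simp add: pos_divide_le_eq mult_ac)
qed

theorem not_positive_recurrent: "\<not> positive_recurrent n K kappa s lam p"
proof
  assume recurrent: "positive_recurrent n K kappa s lam p"
  obtain l0 where l0: "l0 \<in> {1..n}" "w l0 > 0" using weight_pos by blast
  define x0 :: "nat \<Rightarrow> nat" where "x0 l = (if l = l0 then 1 else 0)" for l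
  have x0: "x0 \<in> configs n" using l0 unfolding x0_def configs_def by auto
  have load_x0: "weighted_load n w x0 = w l0"
    using l0(1) by (simp add: weighted_load_def x0_def if_distrib cong: if_cong)
  define B where "B = (\<Sum>l=1..n. \<bar>w l\<bar>)"
  have B: "w l \<le> B" if "l \<in> {1..n}" for l
    using member_le_sum[of l "{1..n}" "\<lambda>l. \<bar>w l\<bar>"] that unfolding B_def by force
  have "B \<ge> 0" unfolding B_def by (simp add: sum_nonneg)
  have "expected_return_time n K kappa s lam p x0 < \<infinity>"
    using recurrent x0 unfolding positive_recurrent_def by blast
  then have "(\<Sum>m. ennreal (survival n K kappa s lam p m x0)) \<noteq> top"
    unfolding expected_return_time_def infinity_ennreal_def by (rule less_imp_neq)
  then have summable: "summable (\<lambda>m. survival n K kappa s lam p m x0)"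
    by (rule summable_suminf_not_top[OF survival_nonneg[OF x0]])
  have c_pos: "w l0 / (w l0 + B) > 0" using l0(2) \<open>B \<ge> 0\<close> by simp
  have lower: "w l0 / (w l0 + B) / real (Suc m) \<le> survival n K kappa s lam p m x0" for m
    using survival_harmonic_lower_bound[OF x0 _ B \<open>B \<ge> 0\<close>] l0(2) load_x0 by simp
  show False using not_summable_harmonic_minorant[OF c_pos lower] summable by contradiction
qed

end

theorem theorem2p3:
  fixes n K :: nat and kappa :: "nat \<Rightarrow> nat" and s :: "nat \<Rightarrow> nat \<Rightarrow> nat"
    and lam :: "nat \<Rightarrow> real" and p :: "(nat \<Rightarrow> nat) \<Rightarrow> nat \<Rightarrow> nat \<Rightarrow> real"
  assumes model: "storage_model n K kappa s lam"
    and no_pos_sol: "\<not> (\<exists>\<alpha> :: nat \<Rightarrow> nat \<Rightarrow> real.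
           (\<forall>i\<in>{1..K}. \<forall>j\<in>{1..kappa i}. \<alpha> i j > 0) \<and>
           (\<forall>i\<in>{1..K}. (\<Sum>j=1..kappa i. \<alpha> i j) = lam i) \<and>
           (\<forall>l\<in>{1..n}. (\<Sum>i=1..K. \<Sum>j=1..kappa i. \<alpha> i j * (if l = s i j then 1 else 0)) = 1 / real n))"
    and policy: "routing_policy n K kappa p"
  shows "\<not> positive_recurrent n K kappa s lam p"
proof -
  obtain w mm where "drift_certificate n K kappa s lam w mm"
    using drift_certificate_of_no_positive_allocation[OF model no_pos_sol] by blast
  then interpret routed_drift n K kappa s lam w mm p
    using policy by (simp add: routed_drift_def routed_drift_axioms_def)
  show ?thesis by (rule not_positive_recurrent)
qed

end
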